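(* For any rooted tree $t=B_+(t_1\cdots t_n)$ and any integer $s\ge0$, $$C_s(t)=\sum_{j=0}^{s}\ \sum_{\substack{r_1+\cdots+r_n=s-j\\ r_1,\ldots,r_n\ge0}}\mathrm{qsh}\big(|t_1|-r_1,\ldots,|t_n|-r_n;\,j\big)\,C_{r_1}(t_1)\cdots C_{r_n}(t_n),$$ where terms with some $r_i\ge|t_i|$ vanish since then $C_{r_i}(t_i)=0$. In particular $C_0(t)=\frac{|t|!}{t!}$, and for the generalized corolla $\mathcal C_{k_1,\ldots,k_n}=B_+(E_{k_1}\cdots E_{k_n})$ one has $C_s(\mathcal C_{k_1,\ldots,k_n})=\mathrm{qsh}(k_1,\ldots,k_n;s)$.
   Context: Let $k$ be a field of characteristic $0$. Rooted trees are finite, non-planar; $|t|$ is the number of vertices of $t$; $B_+(t_1\cdots t_n)$ joins the roots of $t_1,\dots,t_n$ to a new root. The tree factorial: $\bullet!=1$ for the one-vertex tree, $B_+(t_1\cdots t_n)!=|B_+(t_1\cdots t_n)|\prod_jt_j!$. $E_j$ denotes the ladder with $j$ vertices (a chain rooted at an end). $\mathcal H_{CK}$ is the free commutative algebra on nonempty rooted trees; $\mathcal A=k[x]$ carries the quasi-shuffle product $\diamond$ determined by $\mathbf 1\diamond u=u\diamond\mathbf 1=u$ and $x^k\diamond x^l=(x^{k-1}\diamond x^l)x+(x^k\diamond x^{l-1})x+(x^{k-1}\diamond x^{l-1})x$ ($k,l\ge1$). $\Lambda:\mathcal H_{CK}\to\mathcal A$ is the unique unital algebra morphism with $\Lambda(B_+(t_1\cdots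 t_n))=(\Lambda(t_1)\diamond\cdots\diamond\Lambda(t_n))x$. For a nonempty tree $t$, $C_s(t)$ denotes the coefficient of $x^{|t|-s}$ in $\Lambda(t)$ (zero if $|t|-s\le0$ or $s<0$). For nonnegative integers $k_1,\ldots,k_n$ with $K=k_1+\cdots+k_n$ and $r\ge0$, $\mathrm{qsh}(k_1,\ldots,k_n;r)$ is the number of surjective maps $\pi:\{1,\ldots,K\}\to\{1,\ldots,K-r\}$ that are strictly increasing on each block $\{k_1+\cdots+k_j+1,\ldots,k_1+\cdots+k_{j+1}\}$, $j=0,\ldots,n-1$ (equivalently, the coefficient of $x^{K-r}$ in $x^{k_1}\diamond\cdots\diamond x^{k_n}$). *)

theory Defs
  imports "HOL-Computational_Algebra.Polynomial" "HOL-Library.FuncSet"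
begin

text \<open>A tree is a root together with the (unordered) collection of its
  subtrees; we represent the collection by a list. All notions below are invariant
  under permuting that list, so this models non-planar rooted trees.
  B_+(t_1 ... t_n) is Node [t_1, ..., t_n].\<close>
datatype tree = Node "tree list"

fun tsize :: "tree \<Rightarrow> nat" where
  "tsize (Node ts) = 1 + sum_list (map tsize ts)"

fun tfact :: "tree \<Rightarrow> nat" where
  "tfact (Node ts) = tsize (Node ts) * prod_list (map tfact ts)"

text \<open>Ladder E_j with j vertices (j >= 1).\<close>
fun ladder :: "nat \<Rightarrow> tree" where
  "ladder 0 = Node []"
| "ladder (Suc 0) = Node []"
| "ladder (Suc (Suc n)) = Node [ladder (Suc n)]"

text \<open>Quasi-shuffle of monomials x^k \<diamond> x^l in k[x].\<close>
fun qmono :: "nat \<Rightarrow> nat \<Rightarrow> 'a::comm_ring_1 poly" where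
  "qmono 0 l = monom 1 l"
| "qmono (Suc k) 0 = monom 1 (Suc k)"
| "qmono (Suc k) (Suc l) =
     (qmono k (Suc l) + qmono (Suc k) l + qmono k l) * [:0, 1:]"

definition qshuffle :: "'a::comm_ring_1 poly \<Rightarrow> 'a poly \<Rightarrow> 'a poly" where
  "qshuffle p q = (\<Sum>i\<le>degree p. \<Sum>j\<le>degree q. smult (coeff p i * coeff q j) (qmono i j))"

fun Lam :: "tree \<Rightarrow> 'a::comm_ring_1 poly" where
  "Lam (Node ts) = foldr qshuffle (map Lam ts) 1 * [:0, 1:]"

definition Ccoef :: "nat \<Rightarrow> tree \<Rightarrow> 'a::comm_ring_1" where
  "Ccoef s t = (if s < tsize t then coeff (Lam t) (tsize t - s) else 0)"

definition qblock :: "nat list \<Rightarrow> nat \<Rightarrow> nat set" where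
  "qblock ks j = {sum_list (take j ks) + 1 .. sum_list (take (Suc j) ks)}"

definition qsh :: "nat list \<Rightarrow> nat \<Rightarrow> nat" where
  "qsh ks r = (let K = sum_list ks in
     if r \<le> K then
       card {\<pi> \<in> {1..K} \<rightarrow>\<^sub>E {1..K - r}. \<pi> ` {1..K} = {1..K - r} \<and>
                 (\<forall>j < length ks. strict_mono_on (qblock ks j) \<pi>)}
     else 0)"

end

theory Submission
  imports Defs "HOL-Library.Infinite_Set"
begin

text \<open>
  The binomial evaluation beval p m = \<Sum>k. coeff p k * (m choose k)
  turns the quasi-shuffle product into the pointwise product of functions on the naturals
  (both sides of x^k \<diamond> x^l satisfy the same Pascal recursion), and it is injective.
  Counting the maps {1..K} \<rightarrow> {1..m} that are strictly increasing on each block of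
  ks = (k_1,...,k_n) once block by block and once by their image gives
  \<Prod>i (m choose k_i) = \<Sum>M (m choose M) qsh(ks; K - M); hence
  x^k_1 \<diamond> ... \<diamond> x^k_n = \<Sum>r qsh(ks; r) x^(K-r).
  By multilinearity Lambda(B_+(t_1...t_n)) = x (Lambda t_1 \<diamond> ... \<diamond> Lambda t_n) expands
  in these products; reading off the coefficient of x^(|t|-s) and substituting
  k_i = |t_i| - r_i gives the main formula. For s = 0 it reduces to a multinomial recursion
  (qsh(ks; 0) is multinomial, from the top coefficient of x^k \<diamond> x^l), giving
  C_0(t) = |t|!/t!, and Lambda(E_k) = x^k gives the corolla formula.
\<close>

section \<open>Binomial evaluation\<close>

definition beval :: "'a::comm_ring_1 poly \<Rightarrow> nat \<Rightarrow> 'a" where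
  "beval p m = (\<Sum>k\<le>degree p. coeff p k * of_nat (m choose k))"

lemma beval_bound:
  assumes "degree p \<le> D"
  shows "beval p m = (\<Sum>k\<le>D. coeff p k * of_nat (m choose k))"
  unfolding beval_def
  by (rule sum.mono_neutral_left) (use assms in \<open>auto simp: coeff_eq_0\<close>)

lemma beval_add: "beval (p + q) m = beval p m + beval q m"
proof -
  let ?D = "max (degree p) (degree q)"
  have "degree (p + q) \<le> ?D" by (rule degree_add_le) auto
  then show ?thesis
    by (simp add: beval_bound[of _ ?D] beval_bound[of p ?D] beval_bound[of q ?D]
        sum.distrib distrib_right)
qed

lemma beval_diff: "beval (p - q) m = beval p m - beval q m"
  using beval_add[of "p - q" q m] by (simp add: algebra_simps)

lemma beval_zero: "beval 0 m = 0"
  by (simp add: beval_def)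

lemma beval_sum: "beval (\<Sum>x\<in>A. f x) m = (\<Sum>x\<in>A. beval (f x) m)"
  by (induction A rule: infinite_finite_induct) (auto simp: beval_add beval_zero)

lemma beval_smult: "beval (smult c p) m = c * beval p m"
proof -
  have "beval (smult c p) m = (\<Sum>k\<le>degree p. coeff (smult c p) k * of_nat (m choose k))"
    by (rule beval_bound) (simp add: degree_smult_le)
  then show ?thesis by (simp add: beval_def[of p] sum_distrib_left mult.assoc)
qed

lemma beval_monom: "beval (monom c n) m = c * of_nat (m choose n)"
proof -
  have "beval (monom c n) m = (\<Sum>k\<le>n. coeff (monom c n) k * of_nat (m choose k))"
    by (rule beval_bound) (simp add: degree_monom_le)
  also have "\<dots> = (\<Sum>k\<le>n. if k = n then c * of_nat (m choose n) else 0)"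
    by (rule sum.cong) (auto simp: coeff_monom)
  finally show ?thesis by simp
qed

lemma beval_one: "beval 1 m = 1"
  using beval_monom[of 1 0 m] by (simp add: monom_eq_1)

text \<open>Multiplication by x shifts the binomial index; this yields the Pascal recursion in m.\<close>
lemma beval_times_x: "beval (pCons 0 p) m = (\<Sum>k\<le>degree p. coeff p k * of_nat (m choose Suc k))"
proof -
  have "beval (pCons 0 p) m = (\<Sum>k\<le>Suc (degree p). coeff (pCons 0 p) k * of_nat (m choose k))"
    by (rule beval_bound) (simp add: degree_pCons_le)
  then show ?thesis by (simp only: sum.atMost_Suc_shift) simp
qed

lemma beval_times_x_0: "beval (pCons 0 p) 0 = 0"
  by (simp add: beval_times_x)

lemma beval_times_x_Suc: "beval (pCons 0 p) (Suc m) = beval (pCons 0 p) m + beval p m"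
  unfolding beval_times_x beval_def[of p] binomial_Suc_Suc of_nat_add distrib_left sum.distrib
  by simp

text \<open>Binomial evaluation turns the quasi-shuffle of monomials into a product;
  both sides satisfy the same Pascal-type recursion.\<close>
lemma beval_qmono: "beval (qmono k l :: 'a::comm_ring_1 poly) m = of_nat (m choose k) * of_nat (m choose l)"
proof (induction k l arbitrary: m rule: qmono.induct)
  case (3 k l)
  let ?R = "qmono k (Suc l) + qmono (Suc k) l + qmono k l :: 'a poly"
  have x: "qmono (Suc k) (Suc l) = pCons 0 ?R" by (simp add: mult_pCons_right)
  show ?case
  proof (induction m)
    case 0 then show ?case by (simp add: x beval_times_x_0)
  next
    case (Suc m)
    then show ?case
      by (simp only: x beval_times_x_Suc beval_add 3 binomial_Suc_Suc of_nat_add)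
        (simp add: algebra_simps)
  qed
qed (simp_all add: beval_monom)

theorem beval_qshuffle: "beval (qshuffle p q) m = beval p m * beval q m"
  by (simp add: qshuffle_def beval_sum beval_smult beval_qmono beval_def[of p] beval_def[of q]
      sum_product mult_ac)

lemma beval_foldr_qshuffle: "beval (foldr qshuffle ps 1) m = (\<Prod>p\<leftarrow>ps. beval p m)"
  by (induction ps) (auto simp: beval_qshuffle beval_one)

text \<open>A polynomial is determined by its binomial evaluation: if all evaluations vanish,
  then by strong induction each coefficient n equals beval p n = 0, since
  m choose k = 0 for k > m and the lower coefficients already vanish.\<close>
lemma beval_eq_0_imp:
  assumes "\<And>m. beval p m = 0" shows "p = 0"
proof -
  have "coeff p n = 0" for n
  proof (induction n rule: less_induct)
    case (less n)
    have "0 = beval p n" using assms by simp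
    also have "\<dots> = (\<Sum>k\<le>max (degree p) n. coeff p k * of_nat (n choose k))"
      by (rule beval_bound) simp
    also have "\<dots> = (\<Sum>k\<le>max (degree p) n. if k = n then coeff p n else 0)"
      by (rule sum.cong) (auto simp: less binomial_eq_0 nat_neq_iff)
    finally show ?case by simp
  qed
  then show ?thesis by (simp add: poly_eqI)
qed

theorem beval_inject: assumes "\<And>m. beval p m = beval q m" shows "p = q"
  using beval_eq_0_imp[of "p - q"] assms by (simp add: beval_diff)


section \<open>Maps that are strictly increasing on blocks\<close>

lemma strict_mono_on_same_image:
  fixes f g :: "nat \<Rightarrow> nat"
  assumes "finite B" "strict_mono_on B f" "strict_mono_on B g" "f ` B = g ` B" "x \<in> B"
  shows "f x = g x"
proof -
  let ?L = "sorted_list_of_set B"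
  have sL: "sorted_wrt (<) ?L" by (rule strict_sorted_list_of_set)
  have setL: "set ?L = B" using assms(1) by simp
  have sf: "sorted_wrt (<) (map f ?L)"
    unfolding sorted_wrt_map
    by (rule sorted_wrt_mono_rel[OF _ sL]) (use assms(2) setL in \<open>auto dest: strict_mono_onD\<close>)
  have sg: "sorted_wrt (<) (map g ?L)"
    unfolding sorted_wrt_map
    by (rule sorted_wrt_mono_rel[OF _ sL]) (use assms(3) setL in \<open>auto dest: strict_mono_onD\<close>)
  have "map f ?L = map g ?L"
    by (rule strict_sorted_equal[OF sg sf]) (simp add: setL assms(4))
  then show ?thesis using assms(5) setL by (auto simp: map_eq_conv)
qed

lemma interval_order_iso:
  fixes S :: "nat set"
  assumes "finite S" "card S = k"
  shows "strict_mono_on {a+1..a+k} (\<lambda>x. enumerate S (x-a-1))"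
    and "(\<lambda>x. enumerate S (x-a-1)) ` {a+1..a+k} = S"
proof -
  show "strict_mono_on {a+1..a+k} (\<lambda>x. enumerate S (x-a-1))"
    by (rule strict_mono_onI) (use assms in \<open>auto intro!: finite_enumerate_mono\<close>)
  show "(\<lambda>x. enumerate S (x-a-1)) ` {a+1..a+k} = S"
  proof
    show "(\<lambda>x. enumerate S (x-a-1)) ` {a+1..a+k} \<subseteq> S"
      using assms by (auto intro!: finite_enumerate_in_set)
    show "S \<subseteq> (\<lambda>x. enumerate S (x-a-1)) ` {a+1..a+k}"
    proof
      fix s assume "s \<in> S"
      then obtain n where "n < card S" "enumerate S n = s"
        using finite_enumerate_Ex[OF assms(1)] by blast
      then show "s \<in> (\<lambda>x. enumerate S (x-a-1)) ` {a+1..a+k}"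
        using assms by (intro image_eqI[of _ _ "n+a+1"]) auto
    qed
  qed
qed

lemma strict_mono_on_the_inv_into:
  fixes h :: "'a::linorder \<Rightarrow> 'b::linorder"
  assumes "strict_mono_on A h"
  shows "strict_mono_on (h ` A) (the_inv_into A h)"
proof (rule strict_mono_onI)
  have inj: "inj_on h A" using assms by (rule strict_mono_on_imp_inj_on)
  fix u v assume "u \<in> h ` A" "v \<in> h ` A" "u < v"
  then obtain a b where ab: "a \<in> A" "b \<in> A" "u = h a" "v = h b" "h a < h b" by auto
  then have "a < b" using strict_mono_on_less[OF assms ab(1,2)] by blast
  then show "the_inv_into A h u < the_inv_into A h v"
    using ab the_inv_into_f_f[OF inj] by simp
qed

lemma strict_mono_on_restrict:
  "B \<subseteq> A \<Longrightarrow> strict_mono_on B (restrict f A) = strict_mono_on B f"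
  unfolding monotone_on_def by (simp add: subset_iff)

definition incr_maps :: "nat \<Rightarrow> nat \<Rightarrow> nat set \<Rightarrow> (nat \<Rightarrow> nat) set" where
  "incr_maps a k T = {f \<in> {a+1..a+k} \<rightarrow>\<^sub>E T. strict_mono_on {a+1..a+k} f}"

text \<open>Such a map into {1..m} is determined by its image, an arbitrary k-subset of {1..m}.\<close>
lemma card_incr_maps: "card (incr_maps a k {1..m}) = m choose k"
proof -
  let ?B = "{a+1..a+k}"
  have "card (incr_maps a k {1..m}) = card ((\<lambda>f. f ` ?B) ` incr_maps a k {1..m})"
  proof (rule card_image[symmetric], rule inj_onI)
    fix f g assume f: "f \<in> incr_maps a k {1..m}" and g: "g \<in> incr_maps a k {1..m}"
      and e: "f ` ?B = g ` ?B"
    show "f = g"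
    proof (rule extensionalityI[of _ ?B])
      show "f \<in> extensional ?B" "g \<in> extensional ?B" using f g by (auto simp: incr_maps_def PiE_def)
      fix x assume "x \<in> ?B"
      then show "f x = g x"
        using f g e by (intro strict_mono_on_same_image[of ?B]) (auto simp: incr_maps_def)
    qed
  qed
  also have "(\<lambda>f. f ` ?B) ` incr_maps a k {1..m} = {S. S \<subseteq> {1..m} \<and> card S = k}"
  proof
    show "(\<lambda>f. f ` ?B) ` incr_maps a k {1..m} \<subseteq> {S. S \<subseteq> {1..m} \<and> card S = k}"
    proof clarify
      fix f assume f: "f \<in> incr_maps a k {1..m}"
      then have "inj_on f ?B" by (auto simp: incr_maps_def intro: strict_mono_on_imp_inj_on)
      then show "f ` ?B \<subseteq> {1..m} \<and> card (f ` ?B) = k"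
        using f by (auto simp: incr_maps_def card_image PiE_def Pi_def)
    qed
    show "{S. S \<subseteq> {1..m} \<and> card S = k} \<subseteq> (\<lambda>f. f ` ?B) ` incr_maps a k {1..m}"
    proof
      fix S assume "S \<in> {S. S \<subseteq> {1..m} \<and> card S = k}"
      then have S: "S \<subseteq> {1..m}" "card S = k" by auto
      then have fS: "finite S" using finite_subset by blast
      let ?f = "restrict (\<lambda>x. enumerate S (x-a-1)) ?B"
      have im: "?f ` ?B = S" using interval_order_iso(2)[OF fS S(2), of a] by auto
      have "strict_mono_on ?B ?f"
        using interval_order_iso(1)[OF fS S(2), of a] by (simp add: strict_mono_on_restrict)
      then have "?f \<in> incr_maps a k {1..m}" unfolding incr_maps_def using im S(1) by auto
      then show "S \<in> (\<lambda>f. f ` ?B) ` incr_maps a k {1..m}" using im by (intro image_eqI[of _ _ ?f]) auto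
    qed
  qed
  also have "card {S. S \<subseteq> {1..m} \<and> card S = k} = m choose k" by (simp add: n_subsets)
  finally show ?thesis .
qed

definition block_maps :: "nat list \<Rightarrow> nat set \<Rightarrow> (nat \<Rightarrow> nat) set" where
  "block_maps ks T =
     {\<pi> \<in> {1..sum_list ks} \<rightarrow>\<^sub>E T. \<forall>j<length ks. strict_mono_on (qblock ks j) \<pi>}"

lemma sum_list_take_le: "sum_list (take n xs) \<le> (sum_list xs :: nat)"
  by (metis append_take_drop_id sum_list_append le_add1)

lemma qblock_subset: "j < length ks \<Longrightarrow> qblock ks j \<subseteq> {1..sum_list ks}"
  unfolding qblock_def using sum_list_take_le[of "Suc j" ks] by auto

lemma qblock_snoc_old: "j < length ks \<Longrightarrow> qblock (ks @ [k]) j = qblock ks j"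
  unfolding qblock_def by simp

lemma qblock_snoc_last: "qblock (ks @ [k]) (length ks) = {sum_list ks + 1..sum_list ks + k}"
  unfolding qblock_def by simp


lemma block_maps_snoc_iff:
  fixes ks :: "nat list"
  defines "K \<equiv> sum_list ks"
  shows "\<pi> \<in> block_maps (ks @ [k]) T \<longleftrightarrow> \<pi> \<in> extensional {1..K+k} \<and>
     restrict \<pi> {1..K} \<in> block_maps ks T \<and> restrict \<pi> {K+1..K+k} \<in> incr_maps K k T"
proof -
  have split: "{1..K+k} = {1..K} \<union> {K+1..K+k}" by auto
  have blocks: "(\<forall>j<length (ks @ [k]). strict_mono_on (qblock (ks @ [k]) j) \<pi>) \<longleftrightarrow>
      (\<forall>j<length ks. strict_mono_on (qblock ks j) \<pi>) \<and> strict_mono_on {K+1..K+k} \<pi>"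
    using qblock_snoc_old[of _ ks k] qblock_snoc_last[of ks k] unfolding K_def
    by (auto simp: less_Suc_eq)
  have old: "(\<forall>j<length ks. strict_mono_on (qblock ks j) (restrict \<pi> {1..K})) \<longleftrightarrow>
      (\<forall>j<length ks. strict_mono_on (qblock ks j) \<pi>)"
    using qblock_subset[of _ ks] by (simp add: strict_mono_on_restrict K_def)
  show ?thesis
    unfolding block_maps_def incr_maps_def mem_Collect_eq blocks old restrict_PiE_iff
      strict_mono_on_restrict[OF subset_refl]
    by (auto simp: PiE_iff split K_def)
qed

text \<open>Counting block by block: there are \<open>\<Prod>i. m choose k_i\<close> block-increasing maps into {1..m}.\<close>
lemma card_block_maps: "card (block_maps ks {1..m}) = (\<Prod>k\<leftarrow>ks. m choose k)"
proof (induction ks rule: rev_induct)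
  case Nil
  then show ?case by (simp add: block_maps_def)
next
  case (snoc k ks)
  define K where "K = sum_list ks"
  let ?B = "{K+1..K+k}"
  let ?split = "\<lambda>\<pi>::nat \<Rightarrow> nat. (restrict \<pi> {1..K}, restrict \<pi> ?B)"
  let ?glue = "\<lambda>(f, g). (\<lambda>x::nat. if x \<in> {1..K} then f x else g x)"
  have "bij_betw ?split (block_maps (ks @ [k]) {1..m}) (block_maps ks {1..m} \<times> incr_maps K k {1..m})"
  proof (rule bij_betw_byWitness[where f' = ?glue])
    show "\<forall>\<pi>\<in>block_maps (ks @ [k]) {1..m}. ?glue (?split \<pi>) = \<pi>"
      by (auto simp: block_maps_snoc_iff K_def[symmetric] extensional_def fun_eq_iff)
    show "\<forall>fg\<in>block_maps ks {1..m} \<times> incr_maps K k {1..m}. ?split (?glue fg) = fg"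
      by (auto simp: block_maps_def incr_maps_def K_def PiE_def extensional_def fun_eq_iff)
    show "?split ` block_maps (ks @ [k]) {1..m} \<subseteq> block_maps ks {1..m} \<times> incr_maps K k {1..m}"
      by (auto simp: block_maps_snoc_iff K_def[symmetric])
    have "?glue fg \<in> block_maps (ks @ [k]) {1..m}"
      if fg_in: "fg \<in> block_maps ks {1..m} \<times> incr_maps K k {1..m}" for fg
    proof -
      obtain f g where fg: "fg = (f, g)" "f \<in> block_maps ks {1..m}" "g \<in> incr_maps K k {1..m}"
        using fg_in by auto
      have "restrict (?glue fg) {1..K} = f" "restrict (?glue fg) ?B = g"
        using fg by (auto simp: block_maps_def incr_maps_def K_def PiE_def extensional_def fun_eq_iff)
      moreover have "?glue fg \<in> extensional {1..K+k}"
        using fg by (auto simp: block_maps_def incr_maps_def K_def PiE_def extensional_def)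
      ultimately show ?thesis using fg by (simp add: block_maps_snoc_iff K_def[symmetric])
    qed
    then show "?glue ` (block_maps ks {1..m} \<times> incr_maps K k {1..m}) \<subseteq> block_maps (ks @ [k]) {1..m}"
      by blast
  qed
  then have "card (block_maps (ks @ [k]) {1..m}) = card (block_maps ks {1..m}) * card (incr_maps K k {1..m})"
    by (simp add: bij_betw_same_card card_cartesian_product)
  then show ?case using snoc.IH card_incr_maps[of K k m] by simp
qed


definition block_onto :: "nat list \<Rightarrow> nat set \<Rightarrow> (nat \<Rightarrow> nat) set" where
  "block_onto ks U = {\<pi> \<in> block_maps ks U. \<pi> ` {1..sum_list ks} = U}"

lemma qsh_block_onto:
  "qsh ks r = (if r \<le> sum_list ks then card (block_onto ks {1..sum_list ks - r}) else 0)"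
  unfolding qsh_def block_onto_def block_maps_def Let_def by (auto intro!: arg_cong[where f = card])

lemma block_onto_empty:
  assumes "sum_list ks < M" shows "block_onto ks {1..M} = {}"
proof -
  have "card {1..M} \<le> card {1..sum_list ks}" if "\<pi> ` {1..sum_list ks} = {1..M}" for \<pi>
    using card_image_le[of "{1..sum_list ks}" \<pi>] that by simp
  then show ?thesis using assms by (fastforce simp: block_onto_def)
qed

lemma block_maps_compose:
  assumes "\<pi> \<in> block_maps ks A" "strict_mono_on A h" "h ` A \<subseteq> T"
  shows "restrict (h \<circ> \<pi>) {1..sum_list ks} \<in> block_maps ks T"
  unfolding block_maps_def
proof (intro CollectI conjI allI impI)
  show "restrict (h \<circ> \<pi>) {1..sum_list ks} \<in> {1..sum_list ks} \<rightarrow>\<^sub>E T"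
    using assms(1,3) by (force simp: block_maps_def PiE_iff image_subset_iff)
  fix j assume j: "j < length ks"
  have "strict_mono_on (qblock ks j) (h \<circ> \<pi>)"
  proof (rule monotone_on_o[OF assms(2)])
    show "strict_mono_on (qblock ks j) \<pi>" using assms(1) j by (simp add: block_maps_def)
    show "\<pi> ` qblock ks j \<subseteq> A" using assms(1) qblock_subset[OF j] by (auto simp: block_maps_def)
  qed
  then show "strict_mono_on (qblock ks j) (restrict (h \<circ> \<pi>) {1..sum_list ks})"
    using qblock_subset[OF j] by (simp add: strict_mono_on_restrict)
qed

lemma block_onto_compose:
  assumes "\<pi> \<in> block_onto ks V" "strict_mono_on V h" "h ` V = U"
  shows "restrict (h \<circ> \<pi>) {1..sum_list ks} \<in> block_onto ks U"
proof -
  have "restrict (h \<circ> \<pi>) {1..sum_list ks} ` {1..sum_list ks} = h ` (\<pi> ` {1..sum_list ks})"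
    by auto
  then show ?thesis
    using block_maps_compose[of \<pi> ks V h U] assms by (auto simp: block_onto_def)
qed

lemma card_block_onto_iso:
  assumes h: "strict_mono_on V h" and hV: "h ` V = U"
  shows "card (block_onto ks V) = card (block_onto ks U)"
proof -
  let ?D = "{1..sum_list ks}"
  define h' where "h' = the_inv_into V h"
  have inj: "inj_on h V" using h by (rule strict_mono_on_imp_inj_on)
  have h': "strict_mono_on U h'"
    using strict_mono_on_the_inv_into[OF h] hV by (simp add: h'_def)
  have h'U: "h' ` U = V" using the_inv_into_onto[OF inj] hV by (simp add: h'_def)
  have h'h: "h' (h x) = x" if "x \<in> V" for x
    using the_inv_into_f_f[OF inj that] by (simp add: h'_def)
  have hh': "h (h' u) = u" if "u \<in> U" for u
    using f_the_inv_into_f[OF inj] that hV by (auto simp: h'_def)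
  have "bij_betw (\<lambda>\<pi>. restrict (h \<circ> \<pi>) ?D) (block_onto ks V) (block_onto ks U)"
  proof (rule bij_betw_byWitness[where f' = "\<lambda>\<sigma>. restrict (h' \<circ> \<sigma>) ?D"])
    show "\<forall>\<pi>\<in>block_onto ks V. restrict (h' \<circ> restrict (h \<circ> \<pi>) ?D) ?D = \<pi>"
      using h'h by (auto simp: block_onto_def block_maps_def PiE_def Pi_def extensional_def fun_eq_iff)
    show "\<forall>\<sigma>\<in>block_onto ks U. restrict (h \<circ> restrict (h' \<circ> \<sigma>) ?D) ?D = \<sigma>"
      using hh' by (auto simp: block_onto_def block_maps_def PiE_def Pi_def extensional_def fun_eq_iff)
    show "(\<lambda>\<pi>. restrict (h \<circ> \<pi>) ?D) ` block_onto ks V \<subseteq> block_onto ks U"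
      using block_onto_compose[OF _ h hV] by blast
    show "(\<lambda>\<sigma>. restrict (h' \<circ> \<sigma>) ?D) ` block_onto ks U \<subseteq> block_onto ks V"
      using block_onto_compose[OF _ h' h'U] by blast
  qed
  then show ?thesis by (rule bij_betw_same_card)
qed

lemma card_block_onto: "finite U \<Longrightarrow> card (block_onto ks U) = card (block_onto ks {1..card U})"
  using card_block_onto_iso[OF interval_order_iso[of U "card U" 0]] by simp

lemma sum_Pow_card:
  fixes g :: "nat \<Rightarrow> nat"
  assumes "finite S"
  shows "(\<Sum>U\<in>Pow S. g (card U)) = (\<Sum>M\<le>card S. (card S choose M) * g M)"
proof -
  have P: "Pow S = (\<Union>M\<le>card S. {U. U \<subseteq> S \<and> card U = M})"
    using assms by (auto intro: card_mono)
  have "(\<Sum>U\<in>Pow S. g (card U)) = (\<Sum>M\<le>card S. \<Sum>U\<in>{U. U \<subseteq> S \<and> card U = M}. g (card U))"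
    unfolding P by (rule sum.UNION_disjoint) (use assms in auto)
  also have "\<dots> = (\<Sum>M\<le>card S. \<Sum>U\<in>{U. U \<subseteq> S \<and> card U = M}. g M)"
    by (intro sum.cong) auto
  finally show ?thesis using n_subsets[OF assms] by simp
qed

text \<open>Counting the block-increasing maps into {1..m} by their image U, and replacing U by
  the interval {1..card U}, gives \<Prod>i (m choose k_i) = \<Sum>M (m choose M) qsh(ks; K - M).\<close>
lemma prod_choose_block_onto:
  "(\<Prod>k\<leftarrow>ks. m choose k) = (\<Sum>M\<le>m. (m choose M) * card (block_onto ks {1..M}))"
proof -
  let ?D = "{1..sum_list ks}"
  have fin: "finite (block_maps ks {1..m})"
    by (rule finite_subset[of _ "?D \<rightarrow>\<^sub>E {1..m}"]) (auto simp: block_maps_def intro: finite_PiE)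
  have onto: "block_onto ks U = {\<pi> \<in> block_maps ks {1..m}. \<pi> ` ?D = U}" if "U \<subseteq> {1..m}" for U
    using that by (auto simp: block_onto_def block_maps_def)
  have "block_maps ks {1..m} = (\<Union>U\<in>Pow {1..m}. {\<pi> \<in> block_maps ks {1..m}. \<pi> ` ?D = U})"
  proof (intro equalityI subsetI)
    fix \<pi> assume \<pi>: "\<pi> \<in> block_maps ks {1..m}"
    then have "\<pi> ` ?D \<subseteq> {1..m}" by (auto simp: block_maps_def)
    then show "\<pi> \<in> (\<Union>U\<in>Pow {1..m}. {\<pi> \<in> block_maps ks {1..m}. \<pi> ` ?D = U})" using \<pi> by blast
  qed auto
  then have "card (block_maps ks {1..m}) = card (\<Union>U\<in>Pow {1..m}. {\<pi> \<in> block_maps ks {1..m}. \<pi> ` ?D = U})"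
    by (rule arg_cong)
  also have "\<dots> = (\<Sum>U\<in>Pow {1..m}. card {\<pi> \<in> block_maps ks {1..m}. \<pi> ` ?D = U})"
    by (rule card_UN_disjoint) (use fin in auto)
  also have "\<dots> = (\<Sum>U\<in>Pow {1..m}. card (block_onto ks U))"
    by (intro sum.cong refl) (simp add: onto)
  also have "\<dots> = (\<Sum>U\<in>Pow {1..m}. card (block_onto ks {1..card U}))"
    by (intro sum.cong refl card_block_onto) (auto intro: finite_subset)
  also have "\<dots> = (\<Sum>M\<le>m. (m choose M) * card (block_onto ks {1..M}))"
    using sum_Pow_card[of "{1..m}" "\<lambda>M. card (block_onto ks {1..M})"] by simp
  finally show ?thesis using card_block_maps[of ks m] by simp
qed


section \<open>Quasi-shuffles of monomials\<close>

text \<open>The polynomial whose coefficients count block-increasing surjections; it will turn out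
  to be the quasi-shuffle product of the monomials x^k_i.\<close>
definition qsh_poly :: "nat list \<Rightarrow> 'a::comm_ring_1 poly" where
  "qsh_poly ks = (\<Sum>M\<le>sum_list ks. monom (of_nat (card (block_onto ks {1..M}))) M)"

lemma coeff_qsh_poly:
  "coeff (qsh_poly ks :: 'a::comm_ring_1 poly) N =
     (if N \<le> sum_list ks then of_nat (qsh ks (sum_list ks - N)) else 0)"
proof -
  have "coeff (qsh_poly ks :: 'a poly) N =
      (\<Sum>M\<le>sum_list ks. if M = N then of_nat (card (block_onto ks {1..M})) else 0)"
    by (simp add: qsh_poly_def coeff_sum coeff_monom)
  then show ?thesis by (simp add: qsh_block_onto)
qed

lemma degree_qsh_poly: "degree (qsh_poly ks :: 'a::comm_ring_1 poly) \<le> sum_list ks"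
  by (rule degree_le) (simp add: coeff_qsh_poly)

lemma of_nat_prod_list_map: "of_nat (\<Prod>x\<leftarrow>xs. f x) = (\<Prod>x\<leftarrow>xs. of_nat (f x))"
  by (induction xs) simp_all

lemma beval_qsh_poly:
  "beval (qsh_poly ks :: 'a::comm_ring_1 poly) m = (\<Prod>k\<leftarrow>ks. of_nat (m choose k))"
proof -
  let ?g = "\<lambda>M. (of_nat (card (block_onto ks {1..M})) :: 'a) * of_nat (m choose M)"
  have "beval (qsh_poly ks :: 'a poly) m = (\<Sum>M\<le>sum_list ks. ?g M)"
    by (simp add: qsh_poly_def beval_sum beval_monom)
  also have "\<dots> = (\<Sum>M\<le>max (sum_list ks) m. ?g M)"
  proof (rule sum.mono_neutral_left)
    show "\<forall>M\<in>{..max (sum_list ks) m} - {..sum_list ks}. ?g M = 0"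
    proof
      fix M assume "M \<in> {..max (sum_list ks) m} - {..sum_list ks}"
      then have large: "sum_list ks < M" by auto
      show "?g M = 0" by (simp only: block_onto_empty[OF large]) simp
    qed
  qed auto
  also have "\<dots> = (\<Sum>M\<le>m. ?g M)"
    by (rule sum.mono_neutral_right) (auto simp: binomial_eq_0)
  also have "\<dots> = of_nat (\<Sum>M\<le>m. (m choose M) * card (block_onto ks {1..M}))"
    by (simp add: mult.commute)
  also have "\<dots> = (\<Prod>k\<leftarrow>ks. of_nat (m choose k))"
    by (simp only: prod_choose_block_onto[symmetric] of_nat_prod_list_map)
  finally show ?thesis .
qed

theorem qshuffle_monoms:
  "foldr qshuffle (map (monom 1) ks) 1 = (qsh_poly ks :: 'a::comm_ring_1 poly)"
  by (rule beval_inject) (simp add: beval_foldr_qshuffle beval_qsh_poly beval_monom o_def)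

text \<open>Degree and top coefficient of a quasi-shuffle: the top-degree part of x^k \<diamond> x^l is
  the ordinary shuffle, with binomial coefficient ((k+l) choose k).\<close>
lemma degree_qmono: "degree (qmono k l :: 'a::comm_ring_1 poly) \<le> k + l"
proof (induction k l rule: qmono.induct)
  case (3 k l)
  let ?R = "qmono k (Suc l) + qmono (Suc k) l + qmono k l :: 'a poly"
  have "degree ?R \<le> Suc (k + l)"
    using 3 by (intro degree_add_le) auto
  then have "degree (pCons 0 ?R) \<le> Suc (Suc k) + l" by (simp add: degree_pCons_le)
  then show ?case by (simp add: mult_pCons_right)
qed (auto simp: degree_monom_le)

lemma coeff_qmono_top: "coeff (qmono k l :: 'a::comm_ring_1 poly) (k + l) = of_nat ((k + l) choose k)"
proof (induction k l rule: qmono.induct)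
  case (3 k l)
  have "coeff (qmono k l :: 'a poly) (Suc (k + l)) = 0"
    using degree_qmono[of k l] by (intro coeff_eq_0) (simp add: less_Suc_eq_le)
  then have "coeff (qmono (Suc k) (Suc l) :: 'a poly) (Suc k + Suc l)
      = of_nat (Suc (k + l) choose k) + of_nat (Suc (k + l) choose Suc k)"
    using 3 by (simp add: mult_pCons_right)
  also have "\<dots> = of_nat ((Suc k + Suc l) choose Suc k)"
    by (simp only: binomial_Suc_Suc[symmetric] of_nat_add[symmetric]) simp
  finally show ?case .
qed (auto simp: coeff_monom)

lemma qshuffle_bound:
  assumes "degree p \<le> a" "degree q \<le> b"
  shows "qshuffle p q = (\<Sum>i\<le>a. \<Sum>j\<le>b. smult (coeff p i * coeff q j) (qmono i j))"
proof -
  have "qshuffle p q = (\<Sum>i\<le>degree p. \<Sum>j\<le>b. smult (coeff p i * coeff q j) (qmono i j))"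
    unfolding qshuffle_def
    by (rule sum.cong[OF refl], rule sum.mono_neutral_left) (use assms in \<open>auto simp: coeff_eq_0\<close>)
  also have "\<dots> = (\<Sum>i\<le>a. \<Sum>j\<le>b. smult (coeff p i * coeff q j) (qmono i j))"
    by (rule sum.mono_neutral_left) (use assms in \<open>auto simp: coeff_eq_0\<close>)
  finally show ?thesis .
qed

lemma degree_qshuffle: "degree (qshuffle p q :: 'a::comm_ring_1 poly) \<le> degree p + degree q"
  unfolding qshuffle_def
  by (intro degree_sum_le finite_atMost)
    (meson add_mono degree_qmono degree_smult_le order_trans atMost_iff)

lemma coeff_qshuffle_top:
  assumes "degree p \<le> a" "degree q \<le> b"
  shows "coeff (qshuffle p q :: 'a::comm_ring_1 poly) (a + b) =
           of_nat ((a + b) choose a) * coeff p a * coeff q b"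
proof -
  have "coeff (qshuffle p q) (a + b) =
      (\<Sum>i\<le>a. \<Sum>j\<le>b. coeff p i * coeff q j * coeff (qmono i j :: 'a poly) (a + b))"
    by (simp add: qshuffle_bound[OF assms] coeff_sum)
  also have "\<dots> = (\<Sum>i\<le>a. \<Sum>j\<le>b. if i = a then if j = b then
      coeff p a * coeff q b * coeff (qmono a b :: 'a poly) (a + b) else 0 else 0)"
  proof (intro sum.cong refl)
    fix i j assume "i \<in> {..a}" "j \<in> {..b}"
    moreover have "coeff (qmono i j :: 'a poly) (a + b) = 0" if "i + j < a + b"
      using degree_qmono[of i j, where 'a = 'a] that by (intro coeff_eq_0) linarith
    ultimately show "coeff p i * coeff q j * coeff (qmono i j :: 'a poly) (a + b) = (if i = a then
      if j = b then coeff p a * coeff q b * coeff (qmono a b :: 'a poly) (a + b) else 0 else 0)"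
      by auto
  qed
  also have "\<dots> = (\<Sum>i\<le>a. if i = a then
      coeff p a * coeff q b * coeff (qmono a b :: 'a poly) (a + b) else 0)"
    by (intro sum.cong refl) auto
  finally show ?thesis by (simp add: coeff_qmono_top)
qed

lemma qsh_Cons_0: "qsh (k # ks) 0 = ((k + sum_list ks) choose k) * qsh ks 0"
proof -
  have "qsh_poly (k # ks) = qshuffle (monom 1 k) (qsh_poly ks :: int poly)"
    using qshuffle_monoms[of "k # ks", where 'a = int] qshuffle_monoms[of ks, where 'a = int] by simp
  then have "coeff (qsh_poly (k # ks) :: int poly) (k + sum_list ks)
      = of_nat ((k + sum_list ks) choose k) * coeff (qsh_poly ks :: int poly) (sum_list ks)"
    by (simp add: coeff_qshuffle_top degree_monom_le degree_qsh_poly)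
  then have "int (qsh (k # ks) 0) = int (((k + sum_list ks) choose k) * qsh ks 0)"
    by (simp add: coeff_qsh_poly)
  then show ?thesis by (simp only: of_nat_eq_iff)
qed

lemma qsh_multinomial: "qsh ks 0 * (\<Prod>k\<leftarrow>ks. fact k) = fact (sum_list ks)"
proof (induction ks)
  case Nil
  have "coeff (qsh_poly [] :: int poly) 0 = 1" using qshuffle_monoms[of "[]", where 'a = int] by simp
  then show ?case by (simp add: coeff_qsh_poly)
next
  case (Cons k ks)
  have "qsh (k # ks) 0 * (\<Prod>k\<leftarrow>k # ks. fact k)
      = fact k * fact (k + sum_list ks - k) * ((k + sum_list ks) choose k)"
    using Cons by (simp add: qsh_Cons_0 ac_simps)
  also have "\<dots> = fact (k + sum_list ks)" by (rule binomial_fact_lemma) simp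
  finally show ?case by simp
qed


section \<open>Expanding the quasi-shuffle of several polynomials\<close>

lemma prod_list_map_nth: "(\<Prod>x\<leftarrow>xs. f x) = (\<Prod>i<length xs. f (xs ! i))"
  by (simp add: prod.list_conv_set_nth atLeast0LessThan)

text \<open>Lists of length n whose i-th entry is at most d i: the multi-indices of a product
  of n polynomials of degrees at most d 0, ..., d (n-1).\<close>
definition bounded_lists :: "nat \<Rightarrow> (nat \<Rightarrow> nat) \<Rightarrow> nat list set" where
  "bounded_lists n d = {ks. length ks = n \<and> (\<forall>i<n. ks ! i \<le> d i)}"

lemma bounded_lists_Suc:
  "bounded_lists (Suc n) d = (\<lambda>(ks, k). ks @ [k]) ` (bounded_lists n d \<times> {..d n})"
proof
  show "bounded_lists (Suc n) d \<subseteq> (\<lambda>(ks, k). ks @ [k]) ` (bounded_lists n d \<times> {..d n})"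
  proof
    fix ks assume ks: "ks \<in> bounded_lists (Suc n) d"
    then have "length ks = Suc n" by (simp add: bounded_lists_def)
    then have "ks = take n ks @ [ks ! n]"
      by (metis append_take_drop_id Cons_nth_drop_Suc lessI drop_all order_refl)
    moreover have "take n ks \<in> bounded_lists n d" "ks ! n \<le> d n"
      using ks by (auto simp: bounded_lists_def)
    ultimately show "ks \<in> (\<lambda>(ks, k). ks @ [k]) ` (bounded_lists n d \<times> {..d n})"
      by (intro image_eqI[of _ _ "(take n ks, ks ! n)"]) auto
  qed
  show "(\<lambda>(ks, k). ks @ [k]) ` (bounded_lists n d \<times> {..d n}) \<subseteq> bounded_lists (Suc n) d"
    by (auto simp: bounded_lists_def nth_append less_Suc_eq)
qed

lemma finite_bounded_lists: "finite (bounded_lists n d)"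
  by (induction n) (simp_all add: bounded_lists_Suc, simp add: bounded_lists_def)

lemma prod_sum_bounded_lists:
  fixes f :: "nat \<Rightarrow> nat \<Rightarrow> 'a::comm_semiring_1"
  shows "(\<Prod>i<n. \<Sum>k\<le>d i. f i k) = (\<Sum>ks\<in>bounded_lists n d. \<Prod>i<n. f i (ks ! i))"
proof (induction n)
  case 0
  have "bounded_lists 0 d = {[]}" by (auto simp: bounded_lists_def)
  then show ?case by simp
next
  case (Suc n)
  have inj: "inj_on (\<lambda>(ks, k). ks @ [k]) (bounded_lists n d \<times> {..d n})"
    by (auto simp: inj_on_def)
  have snoc: "(\<Prod>i<Suc n. f i ((ks @ [k]) ! i)) = (\<Prod>i<n. f i (ks ! i)) * f n k"
    if "ks \<in> bounded_lists n d" for ks k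
    using that by (auto simp: prod.lessThan_Suc nth_append bounded_lists_def intro!: prod.cong)
  have "(\<Sum>ks\<in>bounded_lists (Suc n) d. \<Prod>i<Suc n. f i (ks ! i))
      = (\<Sum>(ks, k)\<in>bounded_lists n d \<times> {..d n}. (\<Prod>i<n. f i (ks ! i)) * f n k)"
    unfolding bounded_lists_Suc sum.reindex[OF inj] by (intro sum.cong refl) (auto simp: snoc simp del: prod.lessThan_Suc)
  also have "\<dots> = (\<Prod>i<Suc n. \<Sum>k\<le>d i. f i k)"
    by (simp add: Suc prod.lessThan_Suc sum_product sum.cartesian_product)
  finally show ?case ..
qed

theorem foldr_qshuffle_expand:
  fixes ps :: "'a::comm_ring_1 poly list"
  assumes "\<And>i. i < length ps \<Longrightarrow> degree (ps ! i) \<le> d i"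
  shows "foldr qshuffle ps 1 =
    (\<Sum>ks\<in>bounded_lists (length ps) d. smult (\<Prod>i<length ps. coeff (ps ! i) (ks ! i)) (qsh_poly ks))"
proof (rule beval_inject)
  fix m
  let ?n = "length ps"
  have "beval (foldr qshuffle ps 1) m = (\<Prod>i<?n. beval (ps ! i) m)"
    by (simp add: beval_foldr_qshuffle prod_list_map_nth)
  also have "\<dots> = (\<Prod>i<?n. \<Sum>k\<le>d i. coeff (ps ! i) k * of_nat (m choose k))"
    by (intro prod.cong refl beval_bound assms) simp
  also have "\<dots> = (\<Sum>ks\<in>bounded_lists ?n d. \<Prod>i<?n. coeff (ps ! i) (ks ! i) * of_nat (m choose (ks ! i)))"
    by (rule prod_sum_bounded_lists)
  also have "\<dots> = (\<Sum>ks\<in>bounded_lists ?n d.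
      (\<Prod>i<?n. coeff (ps ! i) (ks ! i)) * beval (qsh_poly ks) m)"
    by (intro sum.cong refl)
      (auto simp: beval_qsh_poly prod_list_map_nth bounded_lists_def prod.distrib)
  also have "\<dots> = beval (\<Sum>ks\<in>bounded_lists ?n d.
      smult (\<Prod>i<?n. coeff (ps ! i) (ks ! i)) (qsh_poly ks)) m"
    by (simp add: beval_sum beval_smult)
  finally show "beval (foldr qshuffle ps 1) m = \<dots>" .
qed

section \<open>The tree polynomial\<close>

lemma Lam_Node: "Lam (Node ts) = pCons 0 (foldr qshuffle (map Lam ts) 1)"
  by (simp add: mult_pCons_right)

lemma degree_foldr_qshuffle:
  "degree (foldr qshuffle ps 1 :: 'a::comm_ring_1 poly) \<le> (\<Sum>p\<leftarrow>ps. degree p)"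
  by (induction ps) (auto intro: order_trans[OF degree_qshuffle])

lemma degree_Lam: "degree (Lam t :: 'a::comm_ring_1 poly) \<le> tsize t"
proof (induction t)
  case (Node ts)
  have "degree (foldr qshuffle (map Lam ts) 1 :: 'a poly) \<le> (\<Sum>t\<leftarrow>ts. degree (Lam t :: 'a poly))"
    using degree_foldr_qshuffle[of "map Lam ts"] by (simp add: o_def)
  also have "\<dots> \<le> (\<Sum>t\<leftarrow>ts. tsize t)"
    using Node by (intro sum_list_mono) auto
  finally show ?case by (simp add: Lam_Node degree_pCons_le del: Lam.simps)
qed

lemma coeff_Lam_0: "coeff (Lam t) 0 = 0"
  by (cases t) (simp only: Lam_Node coeff_pCons_0)

text \<open>Expanding that product as a combination of the qsh_poly ks,
  multi-indices with a zero entry drop out because Lambda(t_i) has no constant term.\<close>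
lemma Ccoef_Node:
  fixes ts :: "tree list"
  defines "n \<equiv> length ts" and "d \<equiv> \<lambda>i. tsize (ts ! i)"
  shows "(Ccoef s (Node ts) :: 'a::comm_ring_1) = (if s \<le> (\<Sum>i<n. d i) then
      (\<Sum>ks\<in>{ks \<in> bounded_lists n d. \<forall>i<n. 0 < ks ! i}. (\<Prod>i<n. coeff (Lam (ts ! i)) (ks ! i)) *
         coeff (qsh_poly ks) ((\<Sum>i<n. d i) - s)) else 0)"
proof -
  let ?P = "\<lambda>ks. \<Prod>i<n. coeff (Lam (ts ! i) :: 'a poly) (ks ! i)"
  let ?N = "(\<Sum>i<n. d i) - s"
  have D: "(\<Sum>t\<leftarrow>ts. tsize t) = (\<Sum>i<n. d i)"
    by (simp add: n_def d_def sum_list_sum_nth atLeast0LessThan)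
  have "foldr qshuffle (map Lam ts) 1 =
      (\<Sum>ks\<in>bounded_lists n d. smult (?P ks) (qsh_poly ks) :: 'a poly)"
    using foldr_qshuffle_expand[of "map Lam ts :: 'a poly list" d] degree_Lam[where 'a = 'a]
    by (simp add: n_def d_def)
  then have "Ccoef s (Node ts) = (if s \<le> (\<Sum>i<n. d i) then
      (\<Sum>ks\<in>bounded_lists n d. ?P ks * coeff (qsh_poly ks) ?N) else 0)"
    by (simp add: Ccoef_def Lam_Node D coeff_sum Suc_diff_le del: Lam.simps)
  also have "(\<Sum>ks\<in>bounded_lists n d. ?P ks * coeff (qsh_poly ks) ?N) =
      (\<Sum>ks\<in>{ks \<in> bounded_lists n d. \<forall>i<n. 0 < ks ! i}. ?P ks * coeff (qsh_poly ks) ?N)"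
  proof (rule sum.mono_neutral_right)
    show "\<forall>ks\<in>bounded_lists n d - {ks \<in> bounded_lists n d. \<forall>i<n. 0 < ks ! i}.
        ?P ks * coeff (qsh_poly ks) ?N = 0"
    proof
      fix ks assume "ks \<in> bounded_lists n d - {ks \<in> bounded_lists n d. \<forall>i<n. 0 < ks ! i}"
      then obtain i where i: "i < n" "ks ! i = 0" by auto
      then have "?P ks = 0" by (intro prod_zero) (auto simp: coeff_Lam_0 intro!: bexI[of _ i])
      then show "?P ks * coeff (qsh_poly ks) ?N = 0" by simp
    qed
  qed (auto simp: finite_bounded_lists)
  finally show ?thesis .
qed

section \<open>The coefficient formula\<close>

text \<open>Complementary multi-indices k_i = d i - r_i, linking coefficients of x^k_i in the
  children to the numbers C_r_i of the children.\<close>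
definition compl_list :: "nat \<Rightarrow> (nat \<Rightarrow> nat) \<Rightarrow> nat list \<Rightarrow> nat list" where
  "compl_list n d rs = map (\<lambda>i. d i - rs ! i) [0..<n]"

lemma length_compl_list [simp]: "length (compl_list n d rs) = n"
  by (simp add: compl_list_def)

lemma nth_compl_list [simp]: "i < n \<Longrightarrow> compl_list n d rs ! i = d i - rs ! i"
  by (simp add: compl_list_def)

lemma sum_list_compl_list:
  assumes "length rs = n" "\<forall>i<n. rs ! i \<le> d i"
  shows "sum_list rs \<le> (\<Sum>i<n. d i)"
    and "sum_list (compl_list n d rs) = (\<Sum>i<n. d i) - sum_list rs"
proof -
  have sr: "sum_list rs = (\<Sum>i<n. rs ! i)"
    using assms(1) by (simp add: sum_list_sum_nth atLeast0LessThan)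
  show "sum_list rs \<le> (\<Sum>i<n. d i)" unfolding sr using assms(2) by (intro sum_mono) auto
  have "sum_list (compl_list n d rs) = (\<Sum>i<n. d i - rs ! i)"
    by (simp add: sum_list_sum_nth atLeast0LessThan)
  also have "\<dots> = (\<Sum>i<n. d i) - sum_list rs"
    unfolding sr by (rule sum_subtractf_nat) (use assms(2) in auto)
  finally show "sum_list (compl_list n d rs) = (\<Sum>i<n. d i) - sum_list rs" .
qed

lemma compl_list_bij:
  "bij_betw (compl_list n d) {rs. length rs = n \<and> (\<forall>i<n. rs ! i < d i)}
     {ks \<in> bounded_lists n d. \<forall>i<n. 0 < ks ! i}"
proof (rule bij_betw_byWitness[where f' = "compl_list n d"])
  show "compl_list n d ` {ks \<in> bounded_lists n d. \<forall>i<n. 0 < ks ! i}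
      \<subseteq> {rs. length rs = n \<and> (\<forall>i<n. rs ! i < d i)}"
    by (auto simp: bounded_lists_def) (metis diff_less order.strict_trans2)
qed (auto simp: bounded_lists_def intro!: nth_equalityI)

lemma finite_lists_sum_le: "finite {rs :: nat list. length rs = n \<and> sum_list rs \<le> s}"
proof (rule finite_subset[of _ "{xs. set xs \<subseteq> {..s} \<and> length xs = n}"])
  show "{rs :: nat list. length rs = n \<and> sum_list rs \<le> s} \<subseteq> {xs. set xs \<subseteq> {..s} \<and> length xs = n}"
    using member_le_sum_list by fastforce
qed (rule finite_lists_length_eq, simp)

lemma sum_by_total:
  "(\<Sum>j = 0..s. \<Sum>rs \<in> {rs. length rs = n \<and> sum_list rs = s - j}. h j rs) =
   (\<Sum>rs \<in> {rs :: nat list. length rs = n \<and> sum_list rs \<le> s}. h (s - sum_list rs) rs)"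
proof -
  let ?A = "\<lambda>j. {rs :: nat list. length rs = n \<and> sum_list rs = s - j}"
  have split: "{rs :: nat list. length rs = n \<and> sum_list rs \<le> s} = (\<Union>j\<in>{0..s}. ?A j)"
  proof (intro equalityI subsetI)
    fix rs assume "rs \<in> {rs :: nat list. length rs = n \<and> sum_list rs \<le> s}"
    then show "rs \<in> (\<Union>j\<in>{0..s}. ?A j)" by (intro UN_I[of "s - sum_list rs"]) auto
  qed auto
  have fin: "finite (?A j)" for j
    by (rule finite_subset[OF _ finite_lists_sum_le[of n s]]) auto
  have "(\<Sum>rs \<in> {rs :: nat list. length rs = n \<and> sum_list rs \<le> s}. h (s - sum_list rs) rs) =
      (\<Sum>j\<in>{0..s}. \<Sum>rs\<in>?A j. h (s - sum_list rs) rs)"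
    unfolding split by (rule sum.UNION_disjoint) (auto simp: fin)
  also have "\<dots> = (\<Sum>j = 0..s. \<Sum>rs \<in> ?A j. h j rs)"
    by (intro sum.cong refl) auto
  finally show ?thesis ..
qed

text \<open>The main formula in complemented form: only lists with r_i < |t_i| contribute, and
  the coefficient of x^k_i in Lambda(t_i) is C_(|t_i| - k_i)(t_i).\<close>
lemma Ccoef_Node_compl:
  fixes ts :: "tree list"
  defines "n \<equiv> length ts" and "d \<equiv> \<lambda>i. tsize (ts ! i)"
  shows "(Ccoef s (Node ts) :: 'a::comm_ring_1) =
    (\<Sum>rs\<in>{rs. length rs = n \<and> (\<forall>i<n. rs ! i < d i)}. if sum_list rs \<le> s
       then of_nat (qsh (compl_list n d rs) (s - sum_list rs)) * (\<Prod>i<n. Ccoef (rs ! i) (ts ! i))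
       else 0)"
    (is "_ = (\<Sum>rs\<in>?R. ?g rs)")
proof -
  let ?c = "\<lambda>i k. coeff (Lam (ts ! i) :: 'a poly) k"
  let ?D = "\<Sum>i<n. d i"
  have sums: "sum_list rs \<le> ?D" "sum_list (compl_list n d rs) = ?D - sum_list rs"
    if "rs \<in> ?R" for rs
  proof -
    have "length rs = n" "\<forall>i<n. rs ! i \<le> d i" using that by (auto simp: less_imp_le)
    then show "sum_list rs \<le> ?D" "sum_list (compl_list n d rs) = ?D - sum_list rs"
      by (rule sum_list_compl_list)+
  qed
  have C: "(\<Prod>i<n. Ccoef (rs ! i) (ts ! i)) = (\<Prod>i<n. ?c i (compl_list n d rs ! i))"
    if "rs \<in> ?R" for rs
    using that by (intro prod.cong refl) (simp add: Ccoef_def d_def)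
  show ?thesis
  proof (cases "s \<le> ?D")
    case True
    have "Ccoef s (Node ts) = (\<Sum>ks\<in>{ks \<in> bounded_lists n d. \<forall>i<n. 0 < ks ! i}.
        (\<Prod>i<n. ?c i (ks ! i)) * coeff (qsh_poly ks) (?D - s))"
      using True by (simp add: Ccoef_Node n_def d_def)
    also have "\<dots> = (\<Sum>rs\<in>?R. (\<Prod>i<n. ?c i (compl_list n d rs ! i)) *
        coeff (qsh_poly (compl_list n d rs)) (?D - s))"
      by (rule sum.reindex_bij_betw[OF compl_list_bij, symmetric])
    also have "\<dots> = (\<Sum>rs\<in>?R. ?g rs)"
    proof (intro sum.cong refl)
      fix rs assume rs: "rs \<in> ?R"
      show "(\<Prod>i<n. ?c i (compl_list n d rs ! i)) * coeff (qsh_poly (compl_list n d rs)) (?D - s) = ?g rs"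
        using True sums[OF rs] C[OF rs]
        by (cases "sum_list rs \<le> s") (simp_all add: coeff_qsh_poly mult.commute)
    qed
    finally show ?thesis .
  next
    case False
    have "?g rs = 0" if "rs \<in> ?R" for rs
      using False sums[OF that] by (simp add: qsh_block_onto)
    then show ?thesis using False by (simp add: Ccoef_Node n_def d_def)
  qed
qed

theorem coefficient_formula:
  fixes ts :: "tree list"
  shows "(Ccoef s (Node ts) :: 'a::comm_ring_1) =
           (\<Sum>j = 0..s. \<Sum>rs \<in> {rs. length rs = length ts \<and> sum_list rs = s - j}.
              of_nat (qsh (map (\<lambda>i. tsize (ts ! i) - rs ! i) [0..<length ts]) j) *
              (\<Prod>i < length ts. Ccoef (rs ! i) (ts ! i)))"
proof -
  let ?n = "length ts" and ?d = "\<lambda>i. tsize (ts ! i)"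
  let ?g = "\<lambda>rs. (of_nat (qsh (compl_list ?n ?d rs) (s - sum_list rs)) :: 'a) *
    (\<Prod>i<?n. Ccoef (rs ! i) (ts ! i))"
  let ?R = "{rs. length rs = ?n \<and> (\<forall>i<?n. rs ! i < ?d i)}"
  have finR: "finite ?R"
    by (rule finite_subset[OF _ finite_bounded_lists[of ?n ?d]]) (auto simp: bounded_lists_def)
  have "(\<Sum>rs\<in>{rs. length rs = ?n \<and> sum_list rs \<le> s}. ?g rs) = (\<Sum>rs\<in>{rs \<in> ?R. sum_list rs \<le> s}. ?g rs)"
  proof (rule sum.mono_neutral_right[OF finite_lists_sum_le])
    show "\<forall>rs\<in>{rs. length rs = ?n \<and> sum_list rs \<le> s} - {rs \<in> ?R. sum_list rs \<le> s}. ?g rs = 0"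
    proof
      fix rs assume "rs \<in> {rs. length rs = ?n \<and> sum_list rs \<le> s} - {rs \<in> ?R. sum_list rs \<le> s}"
      then obtain i where i: "i < ?n" "\<not> rs ! i < ?d i" by auto
      then have "Ccoef (rs ! i) (ts ! i) = (0 :: 'a)" by (simp add: Ccoef_def)
      then have "(\<Prod>i<?n. Ccoef (rs ! i) (ts ! i)) = (0 :: 'a)"
        using i(1) by (intro prod_zero) auto
      then show "?g rs = 0" by simp
    qed
  qed auto
  also have "\<dots> = (\<Sum>rs\<in>?R. if sum_list rs \<le> s then ?g rs else 0)"
    by (rule sum.inter_filter[OF finR])
  also have "\<dots> = Ccoef s (Node ts)"
    by (rule Ccoef_Node_compl[symmetric])
  finally show ?thesis
    by (simp add: sum_by_total compl_list_def)
qed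


section \<open>The leading coefficient C_0\<close>

text \<open>For s = 0 only the zero list contributes: C_0(t) = qsh(|t_1|,...,|t_n|; 0) \<Prod> C_0(t_i).\<close>
lemma Ccoef_0_Node:
  "(Ccoef 0 (Node ts) :: 'a::comm_ring_1) =
     of_nat (qsh (map tsize ts) 0) * (\<Prod>i<length ts. Ccoef 0 (ts ! i))"
proof -
  let ?n = "length ts"
  have zeros: "{rs :: nat list. length rs = ?n \<and> (\<forall>x\<in>set rs. x = 0)} = {replicate ?n 0}"
    by (auto, metis replicate_length_same)
  have "map (\<lambda>i. tsize (ts ! i) - replicate ?n 0 ! i) [0..<?n] = map tsize ts"
    by (rule nth_equalityI) auto
  then show ?thesis
    by (simp add: coefficient_formula[of 0 ts] zeros)
qed

lemma tfact_pos: "0 < tfact t"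
proof (induction t)
  case (Node ts)
  then have "0 \<notin> set (map tfact ts)" by fastforce
  then have "prod_list (map tfact ts) \<noteq> 0" by (simp only: prod_list_zero_iff simp_thms)
  then show ?case by simp
qed

text \<open>C_0(t) * t! = |t|!, by induction using that qsh(ks; 0) is multinomial.\<close>
lemma Ccoef_0: "of_nat (tfact t) * (Ccoef 0 t :: 'a::comm_ring_1) = of_nat (fact (tsize t))"
proof (induction t)
  case (Node ts)
  let ?n = "length ts" and ?ks = "map tsize ts"
  have IH: "of_nat (tfact (ts ! i)) * (Ccoef 0 (ts ! i) :: 'a) = of_nat (fact (tsize (ts ! i)))"
    if "i < ?n" for i
    using Node that by simp
  have "of_nat (tfact (Node ts)) * (Ccoef 0 (Node ts) :: 'a) = of_nat (Suc (sum_list ?ks)) *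
      of_nat (qsh ?ks 0) * (\<Prod>i<?n. of_nat (tfact (ts ! i)) * Ccoef 0 (ts ! i))"
    by (simp add: Ccoef_0_Node prod_list_map_nth prod.distrib algebra_simps del: Ccoef_def)
  also have "\<dots> = of_nat (Suc (sum_list ?ks)) * of_nat (qsh ?ks 0) *
      (\<Prod>i<?n. of_nat (fact (tsize (ts ! i))))"
    by (simp add: IH)
  also have "\<dots> = of_nat (Suc (sum_list ?ks) * (qsh ?ks 0 * (\<Prod>k\<leftarrow>?ks. fact k)))"
    by (simp add: prod_list_map_nth algebra_simps)
  also have "\<dots> = of_nat (fact (tsize (Node ts)))"
    by (simp only: qsh_multinomial) simp
  finally show ?case .
qed

section \<open>Generalized corollas\<close>

lemma qshuffle_one: "qshuffle p 1 = (p :: 'a::comm_ring_1 poly)"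
  by (rule beval_inject) (simp add: beval_qshuffle beval_one)

lemma Lam_ladder: "1 \<le> k \<Longrightarrow> Lam (ladder k) = (monom 1 k :: 'a::comm_ring_1 poly)"
proof (induction k rule: ladder.induct)
  case 2
  show ?case by (simp only: ladder.simps Lam_Node) (simp add: monom_Suc monom_eq_1)
next
  case (3 n)
  then show ?case
    by (simp only: ladder.simps Lam_Node) (simp add: qshuffle_one monom_Suc[of _ "Suc n"])
qed simp

lemma tsize_ladder: "1 \<le> k \<Longrightarrow> tsize (ladder k) = k"
  by (induction k rule: ladder.induct) auto

text \<open>For the corolla B_+(E_k_1...E_k_n), Lambda is x times the quasi-shuffle of the
  monomials, so its coefficients are exactly the numbers qsh.\<close>
theorem Ccoef_corolla:
  assumes "\<forall>k \<in> set ks. 1 \<le> k"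
  shows "(Ccoef s (Node (map ladder ks)) :: 'a::comm_ring_1) = of_nat (qsh ks s)"
proof -
  have "map Lam (map ladder ks) = (map (monom 1) ks :: 'a poly list)"
    using assms by (auto simp: Lam_ladder)
  then have L: "(Lam (Node (map ladder ks)) :: 'a poly) = pCons 0 (qsh_poly ks)"
    by (simp only: Lam_Node qshuffle_monoms)
  have "map tsize (map ladder ks) = ks"
    using assms by (induction ks) (auto simp: tsize_ladder)
  then have "tsize (Node (map ladder ks)) = Suc (sum_list ks)" by simp
  then show ?thesis
    by (cases "s \<le> sum_list ks") (simp_all add: Ccoef_def L Suc_diff_le coeff_qsh_poly qsh_block_onto del: Lam.simps)
qed

theorem mainTheorem19:
  fixes ts :: "tree list" and s :: nat and ks :: "nat list"
  shows "(Ccoef s (Node ts) :: 'a::field_char_0) =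
           (\<Sum>j = 0..s. \<Sum>rs \<in> {rs. length rs = length ts \<and> sum_list rs = s - j}.
              of_nat (qsh (map (\<lambda>i. tsize (ts ! i) - rs ! i) [0..<length ts]) j) *
              (\<Prod>i < length ts. Ccoef (rs ! i) (ts ! i)))
       \<and> (Ccoef 0 (Node ts) :: 'a) = of_nat (fact (tsize (Node ts))) / of_nat (tfact (Node ts))
       \<and> ((\<forall>k \<in> set ks. 1 \<le> k) \<longrightarrow>
            (Ccoef s (Node (map ladder ks)) :: 'a) = of_nat (qsh ks s))"
proof (intro conjI impI)
  show "(Ccoef s (Node ts) :: 'a) =
           (\<Sum>j = 0..s. \<Sum>rs \<in> {rs. length rs = length ts \<and> sum_list rs = s - j}.
              of_nat (qsh (map (\<lambda>i. tsize (ts ! i) - rs ! i) [0..<length ts]) j) *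
              (\<Prod>i < length ts. Ccoef (rs ! i) (ts ! i)))"
    by (rule coefficient_formula)
  have "(of_nat (tfact (Node ts)) :: 'a) \<noteq> 0" using tfact_pos[of "Node ts"] by (simp only: of_nat_eq_0_iff)
  then show "(Ccoef 0 (Node ts) :: 'a) = of_nat (fact (tsize (Node ts))) / of_nat (tfact (Node ts))"
    using Ccoef_0[of "Node ts", where 'a = 'a] by (simp add: eq_divide_eq mult.commute)
  show "(Ccoef s (Node (map ladder ks)) :: 'a) = of_nat (qsh ks s)" if "\<forall>k \<in> set ks. 1 \<le> k"
    using that by (rule Ccoef_corolla)
qed

end
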